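(* Let $R=\bigoplus_{s\in S}R_s$ be an $S$-graded ring inducing $S$ with $S$ cancellative. Then $R$ is graded von Neumann regular if and only if $R$ is nearly epsilon-strongly graded and $R_e$ is a von Neumann regular ring for every idempotent $e\in S$.
   Context: Rings are associative, not necessarily unital. $S$-graded ring inducing $S$: $S$ a partial groupoid, $R=\bigoplus_{s\in S}R_s$ with additive subgroups, $R_sR_t\subseteq R_{st}$ when $st$ defined, $R_sR_t\ne0$ implies $st$ defined. Convention: $0\in S$, $R_0=0$, $S\setminus\{0\}=\{s:R_s\ne0\}$, undefined products set to $0$, $0$ absorbing. $H_R=\bigcup_sR_s$. $S$ cancellative: $0\ne su=tu$ or $0\ne us=ut$ implies $s=t$. $I(S)$: idempotents. (LRI): for every $s\in S$ there exist $s^{-1}\in S$, $e,f\in I(S)$ with $es=sf=s$, $fs^{-1}=s^{-1}e=s^{-1}$, $ss^{-1}=e$, $s^{-1}s=f$. $R_sR_t$ denotes the additive subgroup generated by products. $R$ is nearly epsilon-strongly graded if $S$ satisfies (LRI) and for every $s$ and $x\in R_s$ there exist $\epsilon(x)\in R_sR_{s^{-1}}$, $\epsilon'(x)\in R_{s^{-1}}R_s$ with $\epsilon(x)x=x=x\epsilon'(x)$. $R$ is graded von Neumann regular if $x\in xRx$ for all $x\in H_R$. *)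

theory Defs
  imports Main
begin

text \<open>Rings are associative, not necessarily unital: type class ring.
  The partial groupoid S is the whole type 's together with a distinguished
  zero element z (standing for "undefined") and a total operation op
  in which undefined products are set to z; z is absorbing.\<close>

definition additive_subgroup :: "'a::ab_group_add set \<Rightarrow> bool" where
  "additive_subgroup A \<longleftrightarrow> 0 \<in> A \<and> (\<forall>x\<in>A. \<forall>y\<in>A. x + y \<in> A) \<and> (\<forall>x\<in>A. - x \<in> A)"

inductive_set prodset :: "'a::ring set \<Rightarrow> 'a set \<Rightarrow> 'a set" for A B where
  prod: "a \<in> A \<Longrightarrow> b \<in> B \<Longrightarrow> a * b \<in> prodset A B"
| zero: "0 \<in> prodset A B"
| add: "x \<in> prodset A B \<Longrightarrow> y \<in> prodset A B \<Longrightarrow> x + y \<in> prodset A B"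
| neg: "x \<in> prodset A B \<Longrightarrow> - x \<in> prodset A B"

definition graded_ring_inducing ::
  "'s \<Rightarrow> ('s \<Rightarrow> 's \<Rightarrow> 's) \<Rightarrow> ('s \<Rightarrow> 'a::ring set) \<Rightarrow> bool" where
  "graded_ring_inducing z op Rg \<longleftrightarrow>
     (\<forall>s. op z s = z \<and> op s z = z) \<and>
     (\<forall>s. additive_subgroup (Rg s)) \<and>
     Rg z = {0} \<and>
     (\<forall>s. s \<noteq> z \<longrightarrow> Rg s \<noteq> {0}) \<and>
     (\<forall>x::'a. \<exists>F c. finite F \<and> (\<forall>s\<in>F. c s \<in> Rg s) \<and> x = (\<Sum>s\<in>F. c s)) \<and>
     (\<forall>F c. finite F \<and> (\<forall>s\<in>F. c s \<in> Rg s) \<and> (\<Sum>s\<in>F. c s) = 0 \<longrightarrow> (\<forall>s\<in>F. c s = 0)) \<and>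
     (\<forall>s t x y. x \<in> Rg s \<longrightarrow> y \<in> Rg t \<longrightarrow> x * y \<in> Rg (op s t))"

definition cancellative :: "'s \<Rightarrow> ('s \<Rightarrow> 's \<Rightarrow> 's) \<Rightarrow> bool" where
  "cancellative z op \<longleftrightarrow>
     (\<forall>s t u. (op s u \<noteq> z \<and> op s u = op t u) \<longrightarrow> s = t) \<and>
     (\<forall>s t u. (op u s \<noteq> z \<and> op u s = op u t) \<longrightarrow> s = t)"

definition idem :: "('s \<Rightarrow> 's \<Rightarrow> 's) \<Rightarrow> 's \<Rightarrow> bool" where
  "idem op e \<longleftrightarrow> op e e = e"

definition lri_inv :: "('s \<Rightarrow> 's \<Rightarrow> 's) \<Rightarrow> 's \<Rightarrow> 's \<Rightarrow> bool" where
  "lri_inv op s s' \<longleftrightarrow> (\<exists>e f. idem op e \<and> idem op f \<and>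
      op e s = s \<and> op s f = s \<and> op f s' = s' \<and> op s' e = s' \<and>
      op s s' = e \<and> op s' s = f)"

definition LRI :: "('s \<Rightarrow> 's \<Rightarrow> 's) \<Rightarrow> bool" where
  "LRI op \<longleftrightarrow> (\<forall>s. \<exists>s'. lri_inv op s s')"

definition nearly_epsilon_strongly_graded ::
  "('s \<Rightarrow> 's \<Rightarrow> 's) \<Rightarrow> ('s \<Rightarrow> 'a::ring set) \<Rightarrow> bool" where
  "nearly_epsilon_strongly_graded op Rg \<longleftrightarrow> LRI op \<and>
     (\<forall>s. \<exists>s'. lri_inv op s s' \<and>
        (\<forall>x\<in>Rg s. \<exists>\<epsilon>\<in>prodset (Rg s) (Rg s'). \<exists>\<epsilon>'\<in>prodset (Rg s') (Rg s).
            \<epsilon> * x = x \<and> x * \<epsilon>' = x))"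

definition homogeneous :: "('s \<Rightarrow> 'a set) \<Rightarrow> 'a set" where
  "homogeneous Rg = (\<Union>s. Rg s)"

definition graded_vnr :: "('s \<Rightarrow> 'a::ring set) \<Rightarrow> bool" where
  "graded_vnr Rg \<longleftrightarrow> (\<forall>x\<in>homogeneous Rg. \<exists>y::'a. x = x * y * x)"

definition vnr_subring :: "'a::ring set \<Rightarrow> bool" where
  "vnr_subring A \<longleftrightarrow> (\<forall>x\<in>A. \<exists>y\<in>A. x = x * y * x)"

end

theory Submission
  imports Defs
begin

text \<open>
  If \<open>R\<close> is graded von Neumann regular, every nonzero \<open>x \<in> R\<^sub>s\<close> has a homogeneous
  inner inverse: of all components \<open>y\<^sub>t\<close> of a \<open>y\<close> with \<open>x = xyx\<close> only the one with
  \<open>(st)s = s\<close> survives, and cancellativity makes this \<open>t\<close> unique. Taking \<open>w = y\<^sub>txy\<^sub>t\<close>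
  gives \<open>x = xwx\<close>, \<open>w = wxw\<close>; the degrees of \<open>xw\<close>, \<open>wx\<close> are idempotents exhibiting \<open>t\<close>
  as an (LRI)-inverse of \<open>s\<close>, and \<open>xw \<in> R\<^sub>sR\<^sub>t\<close>, \<open>wx \<in> R\<^sub>tR\<^sub>s\<close> are the local units.
  For an idempotent \<open>e\<close> the same uniqueness forces \<open>w \<in> R\<^sub>e\<close>.

  Conversely, if \<open>x\<epsilon>' = x\<close> with \<open>\<epsilon>' = \<Sum> a\<^sub>ib\<^sub>i\<close>, \<open>a\<^sub>i \<in> R\<^sub>s\<^sub>'\<close>, \<open>b\<^sub>i \<in> R\<^sub>s\<close>, then the
  finitely many \<open>xa\<^sub>i\<close> lie in the von Neumann regular ring \<open>R\<^sub>e\<close>, \<open>e = ss'\<close>, and in the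
  right ideal \<open>xR\<close>. Such a ring has a left unit \<open>g = xy\<close> for them, so
  \<open>x = x\<epsilon>' = gx\<epsilon>' = xyx\<close>.
\<close>

definition subring :: "'a::ring set \<Rightarrow> bool" where
  "subring A \<longleftrightarrow> additive_subgroup A \<and> (\<forall>a\<in>A. \<forall>b\<in>A. a * b \<in> A)"

definition right_ideal :: "'a::ring set \<Rightarrow> bool" where
  "right_ideal I \<longleftrightarrow> additive_subgroup I \<and> (\<forall>a\<in>I. \<forall>r. a * r \<in> I)"

lemma additive_subgroup_add:
  "additive_subgroup A \<Longrightarrow> x \<in> A \<Longrightarrow> y \<in> A \<Longrightarrow> x + y \<in> A"
  unfolding additive_subgroup_def by blast

lemma additive_subgroup_diff:
  "additive_subgroup A \<Longrightarrow> x \<in> A \<Longrightarrow> y \<in> A \<Longrightarrow> x - y \<in> A"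
  unfolding additive_subgroup_def by (metis diff_conv_add_uminus)

lemma additive_subgroup_sum:
  assumes "additive_subgroup A" "finite F" "\<forall>t\<in>F. d t \<in> A"
  shows "(\<Sum>t\<in>F. d t) \<in> A"
  using assms(2,3) by (induction F rule: finite_induct) (use assms(1) in \<open>auto simp: additive_subgroup_def\<close>)

lemma right_ideal_principal: "right_ideal (range ((*) x))"
proof -
  have "x * a + x * b \<in> range ((*) x)" "- (x * a) \<in> range ((*) x)" "x * a * r \<in> range ((*) x)"
    for a b r
    by (metis distrib_left rangeI, metis minus_mult_right rangeI, metis mult.assoc rangeI)
  moreover have "0 \<in> range ((*) x)"
    by (metis mult_zero_right rangeI)
  ultimately show ?thesis
    unfolding right_ideal_def additive_subgroup_def by blast
qed

lemma vnr_subring_local_left_unit: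
  assumes A: "subring A" "vnr_subring A" and I: "right_ideal I"
    and "finite X" "X \<subseteq> A \<inter> I"
  shows "\<exists>g\<in>A \<inter> I. \<forall>a\<in>X. g * a = a"
  using assms(4,5)
proof (induction X rule: finite_induct)
  case empty
  show ?case using A I by (auto simp: subring_def right_ideal_def additive_subgroup_def)
next
  case (insert a X)
  then obtain g where g: "g \<in> A \<inter> I" and unit: "\<forall>a'\<in>X. g * a' = a'" by auto
  have a: "a \<in> A \<inter> I" using insert.prems by simp
  have A_add: "additive_subgroup A" and I_add: "additive_subgroup I"
    using A(1) I by (simp_all add: subring_def right_ideal_def)
  have mult_A: "u * v \<in> A" if "u \<in> A" "v \<in> A" for u v
    using A(1) that by (simp add: subring_def)
  have mult_I: "u * r \<in> I" if "u \<in> I" for u r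
    using I that by (simp add: right_ideal_def)
  define b where "b = a - g * a"
  have b: "b \<in> A \<inter> I"
    using a g by (auto simp: b_def intro: additive_subgroup_diff[OF A_add] additive_subgroup_diff[OF I_add]
        mult_A mult_I)
  then obtain v where v: "v \<in> A" "b = b * v * b"
    using A(2) by (auto simp: vnr_subring_def)
  \<comment> \<open>\<open>g' = g + bv(1 - g)\<close> still fixes \<open>X\<close>, and fixes \<open>a\<close> since \<open>(1 - g)a = b = bvb\<close>\<close>
  define g' where "g' = g + b * v - b * v * g"
  have "g' \<in> A \<inter> I"
    using g b v by (auto simp: g'_def intro!: additive_subgroup_diff[OF A_add] additive_subgroup_add[OF A_add]
        additive_subgroup_diff[OF I_add] additive_subgroup_add[OF I_add] mult_A mult_I)
  moreover have "g' * a = a"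
  proof -
    have "g' * a = g * a + b * v * (a - g * a)" by (simp add: g'_def algebra_simps)
    also have "\<dots> = g * a + b" using v(2) by (simp add: b_def)
    finally show ?thesis by (simp add: b_def)
  qed
  moreover have "g' * a' = a'" if "a' \<in> X" for a'
  proof -
    have "g' * a' = g * a' + b * v * a' - b * v * (g * a')"
      by (simp add: g'_def distrib_right left_diff_distrib mult.assoc)
    then show ?thesis using unit that by simp
  qed
  ultimately show ?case by blast
qed

lemma prodset_mono: "w \<in> prodset B C \<Longrightarrow> B \<subseteq> B' \<Longrightarrow> w \<in> prodset B' C"
proof (induction rule: prodset.induct)
  case (prod a b)
  then show ?case by (simp add: subset_iff prodset.prod)
qed (simp_all add: prodset.intros)

lemma prodset_finite_generators:
  "w \<in> prodset B C \<Longrightarrow> \<exists>B'. finite B' \<and> B' \<subseteq> B \<and> w \<in> prodset B' C"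
proof (induction rule: prodset.induct)
  case (prod a b)
  have "a * b \<in> prodset {a} C" using prod by (simp add: prodset.prod)
  then show ?case using prod by blast
next
  case zero
  show ?case by (blast intro: prodset.zero)
next
  case (add x y)
  then obtain B1 B2 where "finite B1" "B1 \<subseteq> B" "x \<in> prodset B1 C"
    "finite B2" "B2 \<subseteq> B" "y \<in> prodset B2 C" by blast
  then have "x + y \<in> prodset (B1 \<union> B2) C"
    by (meson prodset.add prodset_mono sup_ge1 sup_ge2)
  then show ?case using \<open>finite B1\<close> \<open>finite B2\<close> \<open>B1 \<subseteq> B\<close> \<open>B2 \<subseteq> B\<close> by blast
next
  case (neg x)
  then show ?case by (blast intro: prodset.neg)
qed

lemma prodset_mult_left: "w \<in> prodset B C \<Longrightarrow> x * w \<in> prodset ((*) x ` B) C"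
proof (induction rule: prodset.induct)
  case (prod a b)
  then have "x * a * b \<in> prodset ((*) x ` B) C" by (simp add: prodset.prod)
  then show ?case by (simp add: mult.assoc)
qed (simp_all add: distrib_left prodset.intros)

lemma prodset_left_unit: "w \<in> prodset B C \<Longrightarrow> \<forall>b\<in>B. g * b = b \<Longrightarrow> g * w = w"
  by (induction rule: prodset.induct) (simp_all add: distrib_left mult.assoc[symmetric])

locale graded_ring =
  fixes z :: 's and op :: "'s \<Rightarrow> 's \<Rightarrow> 's" and Rg :: "'s \<Rightarrow> 'a::ring set"
  assumes graded: "graded_ring_inducing z op Rg"
begin

lemma op_zero [simp]: "op z s = z" "op s z = z"
  using graded by (simp_all add: graded_ring_inducing_def)

lemma grade_subgroup: "additive_subgroup (Rg s)"
  using graded by (simp add: graded_ring_inducing_def)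

lemma zero_in_grade [simp]: "0 \<in> Rg s"
  using grade_subgroup by (simp add: additive_subgroup_def)

lemma grade_zero: "Rg z = {0}"
  using graded by (simp add: graded_ring_inducing_def)

lemma grade_nontrivial: "s \<noteq> z \<Longrightarrow> \<exists>x\<in>Rg s. x \<noteq> 0"
  using graded zero_in_grade[of s] by (auto simp: graded_ring_inducing_def)

lemma homogeneous_decomposition:
  "\<exists>F c. finite F \<and> (\<forall>s\<in>F. c s \<in> Rg s) \<and> x = (\<Sum>s\<in>F. c s)"
  using graded by (simp add: graded_ring_inducing_def)

lemma homogeneous_components_zero:
  "finite F \<Longrightarrow> \<forall>s\<in>F. c s \<in> Rg s \<Longrightarrow> (\<Sum>s\<in>F. c s) = 0 \<Longrightarrow> s \<in> F \<Longrightarrow> c s = 0"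
  using graded unfolding graded_ring_inducing_def by blast

lemma grade_mult: "x \<in> Rg s \<Longrightarrow> y \<in> Rg t \<Longrightarrow> x * y \<in> Rg (op s t)"
  using graded by (simp add: graded_ring_inducing_def)

lemma grade_unique:
  assumes "a \<in> Rg u" "a \<in> Rg v" "a \<noteq> 0"
  shows "u = v"
proof (rule ccontr)
  assume "u \<noteq> v"
  define c where "c t = (if t = u then a else - a)" for t
  have "\<forall>t\<in>{u, v}. c t \<in> Rg t"
    using assms grade_subgroup[of v] \<open>u \<noteq> v\<close> by (simp add: c_def additive_subgroup_def)
  moreover have "(\<Sum>t\<in>{u, v}. c t) = 0"
    using \<open>u \<noteq> v\<close> by (simp add: c_def)
  ultimately have "c u = 0"
    using homogeneous_components_zero[of "{u, v}" c u] by simp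
  with assms show False by (simp add: c_def)
qed

lemma nonzero_grade: "x \<in> Rg s \<Longrightarrow> x \<noteq> 0 \<Longrightarrow> s \<noteq> z"
  using grade_zero by auto

lemma homogeneous_component_of_sum:
  assumes a: "a \<in> Rg s" and F: "finite F" and d: "\<forall>i\<in>F. d i \<in> Rg (deg i)"
    and sum: "a = (\<Sum>i\<in>F. d i)"
  shows "a = (\<Sum>i\<in>{i\<in>F. deg i = s}. d i)"
proof -
  define D where "D = insert s (deg ` F)"
  define c where "c u = (\<Sum>i\<in>{i\<in>F. deg i = u}. d i) - (if u = s then a else 0)" for u
  have D: "finite D" using F by (simp add: D_def)
  have "c u \<in> Rg u" for u
  proof -
    have "(\<Sum>i\<in>{i\<in>F. deg i = u}. d i) \<in> Rg u"
      using d F by (intro additive_subgroup_sum[OF grade_subgroup]) auto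
    then show ?thesis
      unfolding c_def using a by (intro additive_subgroup_diff[OF grade_subgroup]) auto
  qed
  moreover have "(\<Sum>u\<in>D. c u) = 0"
  proof -
    have "(\<Sum>u\<in>D. \<Sum>i\<in>{i\<in>F. deg i = u}. d i) = (\<Sum>i\<in>F. d i)"
      using sum.group[OF F D, of deg d] by (auto simp: D_def)
    moreover have "(\<Sum>u\<in>D. if u = s then a else 0) = a"
      using D by (simp add: D_def)
    ultimately show ?thesis
      using sum by (simp add: c_def sum_subtractf)
  qed
  ultimately have "c s = 0"
    using homogeneous_components_zero[OF D] by (simp add: D_def)
  then show ?thesis by (simp add: c_def)
qed

lemma idem_grade_if_idempotent: "p \<in> Rg e \<Longrightarrow> p * p = p \<Longrightarrow> p \<noteq> 0 \<Longrightarrow> idem op e"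
  using grade_mult grade_unique unfolding idem_def by metis

lemma inner_inverse_sandwich_grade:
  assumes x: "x \<in> Rg s" and w: "w \<in> Rg t" and xwx: "x * w * x = x" and "x \<noteq> 0"
  shows "op (op s t) s = s"
  using grade_unique[OF grade_mult[OF grade_mult[OF x w] x, unfolded xwx] x \<open>x \<noteq> 0\<close>] .

lemma inner_inverse_grades_lri_inv:
  assumes x: "x \<in> Rg s" and w: "w \<in> Rg t" and xwx: "x * w * x = x" and wxw: "w * x * w = w"
    and "x \<noteq> 0"
  shows "lri_inv op s t"
proof -
  have "w \<noteq> 0" using xwx \<open>x \<noteq> 0\<close> by auto
  have xw: "x * w \<in> Rg (op s t)" and wx: "w * x \<in> Rg (op t s)"
    using x w by (simp_all add: grade_mult)
  have "x * w \<noteq> 0" "w * x \<noteq> 0"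
    using xwx \<open>x \<noteq> 0\<close> by (metis mult_zero_left mult_zero_right mult.assoc)+
  moreover have "x * w * (x * w) = x * w" "w * x * (w * x) = w * x"
    by (simp_all add: mult.assoc[symmetric] xwx wxw)
  ultimately have "idem op (op s t)" "idem op (op t s)"
    using xw wx idem_grade_if_idempotent by blast+
  moreover have "op s (op t s) = s" "op t (op s t) = t"
  proof -
    have "x * (w * x) = x" "w * (x * w) = w"
      by (simp_all add: mult.assoc[symmetric] xwx wxw)
    then have "x \<in> Rg (op s (op t s))" "w \<in> Rg (op t (op s t))"
      using grade_mult[OF x wx] grade_mult[OF w xw] by simp_all
    then show "op s (op t s) = s" "op t (op s t) = t"
      using grade_unique x w \<open>x \<noteq> 0\<close> \<open>w \<noteq> 0\<close> by blast+
  qed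
  moreover have "op (op s t) s = s" "op (op t s) t = t"
    using inner_inverse_sandwich_grade x w xwx wxw \<open>x \<noteq> 0\<close> \<open>w \<noteq> 0\<close> by blast+
  ultimately show ?thesis
    unfolding lri_inv_def by blast
qed

lemma lri_inv_zero: "lri_inv op z z"
  unfolding lri_inv_def idem_def by auto

lemma graded_vnr_homogeneous: "graded_vnr Rg \<Longrightarrow> x \<in> Rg s \<Longrightarrow> \<exists>y. x * y * x = x"
  unfolding graded_vnr_def homogeneous_def by (metis UN_I UNIV_I)

lemma graded_vnr_if_nearly_epsilon_strongly_graded:
  assumes nesg: "nearly_epsilon_strongly_graded op Rg"
    and vnr: "\<forall>e. idem op e \<longrightarrow> vnr_subring (Rg e)"
  shows "graded_vnr Rg"
  unfolding graded_vnr_def homogeneous_def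
proof
  fix x assume "x \<in> (\<Union>s. Rg s)"
  then obtain s where x: "x \<in> Rg s" by blast
  obtain s' \<epsilon>' where s': "lri_inv op s s'" and \<epsilon>': "\<epsilon>' \<in> prodset (Rg s') (Rg s)" "x * \<epsilon>' = x"
    using nesg x unfolding nearly_epsilon_strongly_graded_def by blast
  define e where "e = op s s'"
  have "idem op e" using s' by (auto simp: lri_inv_def e_def)
  then have e: "subring (Rg e)" "vnr_subring (Rg e)"
    using vnr grade_subgroup grade_mult[of _ e _ e] by (auto simp: subring_def idem_def)
  obtain B where B: "finite B" "B \<subseteq> Rg s'" "\<epsilon>' \<in> prodset B (Rg s)"
    using prodset_finite_generators[OF \<epsilon>'(1)] by blast
  have "(*) x ` B \<subseteq> Rg e \<inter> range ((*) x)"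
    using B(2) x grade_mult by (auto simp: e_def)
  moreover have "finite ((*) x ` B)" using B(1) by simp
  ultimately obtain g where g: "g \<in> range ((*) x)" and unit: "\<forall>a\<in>(*) x ` B. g * a = a"
    using vnr_subring_local_left_unit[OF e right_ideal_principal] by blast
  have "g * (x * \<epsilon>') = x * \<epsilon>'"
    using prodset_left_unit[OF prodset_mult_left[OF B(3)] unit] .
  then have "g * x = x" using \<epsilon>'(2) by simp
  with g show "\<exists>y. x = x * y * x" by (metis rangeE)
qed

end

locale cancellative_graded_ring = graded_ring +
  assumes cancellative: "cancellative z op"
begin

lemma sandwich_cancel:
  assumes "s \<noteq> z" "op (op s t) s = s" "op (op s t') s = s"
  shows "t = t'"
proof -
  have "op s t = op s t'"
    using cancellative assms unfolding cancellative_def by metis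
  moreover have "op s t \<noteq> z"
    using assms by (metis op_zero(1))
  ultimately show ?thesis
    using cancellative unfolding cancellative_def by metis
qed

lemma homogeneous_inner_inverse:
  assumes x: "x \<in> Rg s" and y: "x * y * x = x"
  shows "\<exists>t w. w \<in> Rg t \<and> x * w * x = x \<and> w * x * w = w"
proof (cases "x = 0")
  case True
  then show ?thesis using zero_in_grade by fastforce
next
  case False
  obtain F c where F: "finite F" and c: "\<forall>t\<in>F. c t \<in> Rg t" and yc: "y = (\<Sum>t\<in>F. c t)"
    using homogeneous_decomposition by blast
  define deg where "deg t = op (op s t) s" for t
  have "x = (\<Sum>t\<in>F. x * c t * x)"
    using y yc by (simp add: sum_distrib_left sum_distrib_right)
  moreover have "\<forall>t\<in>F. x * c t * x \<in> Rg (deg t)"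
    using c x grade_mult by (simp add: deg_def)
  ultimately have x_sum: "x = (\<Sum>t\<in>{t\<in>F. deg t = s}. x * c t * x)"
    using homogeneous_component_of_sum[OF x F, of "\<lambda>t. x * c t * x" deg] by blast
  then have "{t\<in>F. deg t = s} \<noteq> {}"
    using False by force
  then obtain t where t: "t \<in> F" "deg t = s"
    by blast
  \<comment> \<open>by cancellativity only one component of \<open>y\<close> contributes\<close>
  then have "{t\<in>F. deg t = s} = {t}"
    using sandwich_cancel[OF nonzero_grade[OF x False]] by (auto simp: deg_def)
  then have xcx: "x * c t * x = x" using x_sum by simp
  define w where "w = c t * x * c t"
  have "w \<in> Rg (op (op t s) t)"
    using c t x grade_mult by (simp add: w_def)
  moreover have "x * w * x = x"
    by (simp add: w_def mult.assoc[symmetric] xcx)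
  moreover have "w * x * w = w"
  proof -
    have "w * x * w = c t * (x * c t * x) * c t * x * c t"
      by (simp add: w_def mult.assoc)
    also have "\<dots> = c t * x * c t * x * c t"
      by (simp only: xcx)
    also have "\<dots> = c t * (x * c t * x) * c t"
      by (simp add: mult.assoc)
    also have "\<dots> = w"
      by (simp only: xcx w_def)
    finally show ?thesis .
  qed
  ultimately show ?thesis by blast
qed

lemma graded_vnr_inner_inverse:
  "graded_vnr Rg \<Longrightarrow> x \<in> Rg s \<Longrightarrow> \<exists>t w. w \<in> Rg t \<and> x * w * x = x \<and> w * x * w = w"
  using graded_vnr_homogeneous homogeneous_inner_inverse by blast

lemma graded_vnr_local_units:
  assumes vnr: "graded_vnr Rg"
  shows "\<exists>s'. lri_inv op s s' \<and> (\<forall>x\<in>Rg s. \<exists>\<epsilon>\<in>prodset (Rg s) (Rg s').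
           \<exists>\<epsilon>'\<in>prodset (Rg s') (Rg s). \<epsilon> * x = x \<and> x * \<epsilon>' = x)"
proof (cases "s = z")
  case True
  then show ?thesis
    using lri_inv_zero grade_zero prodset.zero by fastforce
next
  case False
  obtain x0 where x0: "x0 \<in> Rg s" "x0 \<noteq> 0"
    using grade_nontrivial[OF False] by blast
  then obtain t w0 where w0: "w0 \<in> Rg t" "x0 * w0 * x0 = x0" "w0 * x0 * w0 = w0"
    using graded_vnr_inner_inverse[OF vnr] by blast
  have "\<exists>\<epsilon>\<in>prodset (Rg s) (Rg t). \<exists>\<epsilon>'\<in>prodset (Rg t) (Rg s). \<epsilon> * x = x \<and> x * \<epsilon>' = x"
    if x: "x \<in> Rg s" for x
  proof (cases "x = 0")
    case True
    then show ?thesis using prodset.zero by fastforce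
  next
    case False
    obtain t' w where w: "w \<in> Rg t'" "x * w * x = x" "w * x * w = w"
      using graded_vnr_inner_inverse[OF vnr x] by blast
    have "t' = t"
      using sandwich_cancel[OF \<open>s \<noteq> z\<close>] inner_inverse_sandwich_grade[OF x w(1,2) False]
        inner_inverse_sandwich_grade[OF x0(1) w0(1,2) x0(2)] by blast
    then have "x * w \<in> prodset (Rg s) (Rg t)" "w * x \<in> prodset (Rg t) (Rg s)"
      using x w(1) by (simp_all add: prodset.prod)
    moreover have "x * (w * x) = x"
      using w(2) by (simp add: mult.assoc[symmetric])
    ultimately show ?thesis
      using w(2) by blast
  qed
  moreover have "lri_inv op s t"
    using inner_inverse_grades_lri_inv[OF x0(1) w0 x0(2)] .
  ultimately show ?thesis by blast
qed

lemma nearly_epsilon_strongly_graded_if_graded_vnr: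
  "graded_vnr Rg \<Longrightarrow> nearly_epsilon_strongly_graded op Rg"
  using graded_vnr_local_units unfolding nearly_epsilon_strongly_graded_def LRI_def by blast

lemma vnr_subring_idem_grade_if_graded_vnr:
  assumes vnr: "graded_vnr Rg" and e: "idem op e"
  shows "vnr_subring (Rg e)"
  unfolding vnr_subring_def
proof
  fix x assume x: "x \<in> Rg e"
  show "\<exists>y\<in>Rg e. x = x * y * x"
  proof (cases "x = 0")
    case True
    then show ?thesis by (metis mult_zero_left zero_in_grade)
  next
    case False
    obtain t w where w: "w \<in> Rg t" "x * w * x = x"
      using graded_vnr_inner_inverse[OF vnr x] by blast
    have "op (op e t) e = e"
      using inner_inverse_sandwich_grade[OF x w False] .
    moreover have "op (op e e) e = e"
      using e by (simp add: idem_def)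
    ultimately have "t = e"
      using sandwich_cancel[OF nonzero_grade[OF x False]] by blast
    with w show ?thesis by (metis bexI)
  qed
qed

end

theorem theorem4p10:
  fixes z :: 's and op :: "'s \<Rightarrow> 's \<Rightarrow> 's" and Rg :: "'s \<Rightarrow> 'a::ring set"
  assumes "graded_ring_inducing z op Rg"
    and "cancellative z op"
  shows "graded_vnr Rg \<longleftrightarrow>
           (nearly_epsilon_strongly_graded op Rg \<and> (\<forall>e. idem op e \<longrightarrow> vnr_subring (Rg e)))"
proof -
  interpret cancellative_graded_ring z op Rg
    using assms by (simp add: cancellative_graded_ring_def cancellative_graded_ring_axioms_def graded_ring_def)
  show ?thesis
    using graded_vnr_if_nearly_epsilon_strongly_graded nearly_epsilon_strongly_graded_if_graded_vnr
      vnr_subring_idem_grade_if_graded_vnr by blast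
qed

end
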